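(* For every $a\geq 0$, the space $\mathcal{A}_a$ has the following properties: (i) the set of all polynomials is dense in $\mathcal{A}_a$; (ii) on every bounded subset $B\subset \mathcal{A}_a$, the relative topology induced by the topology $\mathcal{T}_a$ coincides with the relative topology of uniform convergence on compact subsets of $\mathbb{C}$; (iii) for every $b\geq 0$, every $f\in \mathcal{A}_a$ and every $g\in\mathcal{A}_b$, the product $fg$ belongs to $\mathcal{A}_{a+b}$.
   Context: Let $\mathcal{E}$ denote the set of all entire functions $\mathbb{C}\to\mathbb{C}$. For $b>0$ and $f\in\mathcal{E}$ put $\|f\|_b=\sup_{k\in\mathbb{N}_0} b^{-k}|f^{(k)}(0)|$, where $\mathbb{N}_0=\{0,1,2,\dots\}$. For $a\geq 0$ let $\mathcal{A}_a=\{f\in\mathcal{E}: \|f\|_b<\infty \text{ for all } b>a\}$, equipped with the locally convex topology $\mathcal{T}_a$ generated by the family of norms $\{\|\cdot\|_b: b>a\}$. A subset $B\subset\mathcal{A}_a$ is bounded in $\mathcal{A}_a$ if for every $b>a$ there is $C_b$ with $\sup_{f\in B}\|f\|_b\leq C_b$. *)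

theory Defs
  imports "HOL-Analysis.Analysis"
begin

definition entire :: "(complex \<Rightarrow> complex) set" where
  "entire = {f. f holomorphic_on UNIV}"

definition coef_seq :: "real \<Rightarrow> (complex \<Rightarrow> complex) \<Rightarrow> nat \<Rightarrow> real" where
  "coef_seq b f k = cmod ((deriv ^^ k) f 0) / b ^ k"

text \<open>The norm ||f||_b = sup_k b^(-k) |f^(k)(0)|; meaningful (finite) when the
  sequence is bounded above, which is encoded by the predicate norm_finite.\<close>
definition norm_b :: "real \<Rightarrow> (complex \<Rightarrow> complex) \<Rightarrow> real" where
  "norm_b b f = (SUP k. coef_seq b f k)"

definition norm_finite :: "real \<Rightarrow> (complex \<Rightarrow> complex) \<Rightarrow> bool" where
  "norm_finite b f \<longleftrightarrow> bdd_above (range (coef_seq b f))"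

definition A_space :: "real \<Rightarrow> (complex \<Rightarrow> complex) set" where
  "A_space a = {f \<in> entire. \<forall>b>a. norm_finite b f}"

definition T_topology :: "real \<Rightarrow> (complex \<Rightarrow> complex) topology" where
  "T_topology a = topology (\<lambda>U. U \<subseteq> A_space a \<and>
     (\<forall>f\<in>U. \<exists>F \<epsilon>. finite F \<and> F \<subseteq> {a<..} \<and> \<epsilon> > 0 \<and>
        {g \<in> A_space a. \<forall>b\<in>F. norm_b b (\<lambda>z. g z - f z) < \<epsilon>} \<subseteq> U))"

definition compact_conv_topology :: "(complex \<Rightarrow> complex) topology" where
  "compact_conv_topology = topology (\<lambda>U. U \<subseteq> entire \<and>
     (\<forall>f\<in>U. \<exists>K \<epsilon>. compact K \<and> \<epsilon> > 0 \<and>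
        {g \<in> entire. \<forall>z\<in>K. cmod (g z - f z) < \<epsilon>} \<subseteq> U))"

definition A_bounded :: "real \<Rightarrow> (complex \<Rightarrow> complex) set \<Rightarrow> bool" where
  "A_bounded a B \<longleftrightarrow> B \<subseteq> A_space a \<and>
     (\<forall>b>a. \<exists>C. \<forall>f\<in>B. norm_b b f \<le> C)"

definition polynomials :: "(complex \<Rightarrow> complex) set" where
  "polynomials = {(\<lambda>z. poly p z) | p. True}"

end

theory Submission
  imports Defs "HOL-Complex_Analysis.Complex_Analysis"
begin

(* Everything is read off the Taylor coefficients f^(k)(0). Since ||f||_b decreases in b,
  T_a has a base of single-norm balls. If h is bounded in some ||.||_b' with b' < b, its
  coefficients of order k >= N contribute at most ||h||_b' (b'/b)^N to ||h||_b, so ||h||_b is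
  small as soon as its first N coefficients are. For truncated Taylor series this gives the
  density of polynomials; on a bounded set, where Cauchy's inequality bounds the first N
  coefficients by the supremum over the unit disc, it shows that uniform convergence on
  compacta implies convergence in T_a. The converse is |h z| <= ||h||_b exp (b |z|).
  The product estimate is Leibniz's rule combined with the binomial expansion of (a'+b')^n. *)

lemma coef_seq_nonneg: "b \<ge> 0 \<Longrightarrow> 0 \<le> coef_seq b f k"
  by (simp add: coef_seq_def)

lemma coef_seq_le_norm_b: "norm_finite b f \<Longrightarrow> coef_seq b f k \<le> norm_b b f"
  unfolding norm_finite_def norm_b_def by (rule cSUP_upper) auto

lemma norm_b_le: "(\<And>k. coef_seq b f k \<le> M) \<Longrightarrow> norm_b b f \<le> M"
  unfolding norm_b_def by (rule cSUP_least) auto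

lemma norm_finiteI: "(\<And>k. coef_seq b f k \<le> M) \<Longrightarrow> norm_finite b f"
  unfolding norm_finite_def by (rule bdd_aboveI2)

lemma norm_b_nonneg: "b \<ge> 0 \<Longrightarrow> norm_finite b f \<Longrightarrow> 0 \<le> norm_b b f"
  using coef_seq_nonneg coef_seq_le_norm_b order_trans by blast

lemma norm_b_zero: "norm_b b (\<lambda>z. 0) = 0"
  by (simp add: norm_b_def coef_seq_def)

lemma higher_deriv_le_norm_b:
  assumes "b > 0" "norm_finite b f"
  shows "cmod ((deriv ^^ k) f 0) \<le> norm_b b f * b ^ k"
  using coef_seq_le_norm_b[OF assms(2), of k] assms(1)
  by (simp add: coef_seq_def pos_divide_le_eq)

lemma coef_seq_rescale: "0 < b \<Longrightarrow> 0 < c \<Longrightarrow> coef_seq c f k = coef_seq b f k * (b / c) ^ k"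
  by (simp add: coef_seq_def power_divide)

lemma coef_seq_add_le:
  assumes "f \<in> entire" "g \<in> entire" "b \<ge> 0"
  shows "coef_seq b (\<lambda>z. f z + g z) k \<le> coef_seq b f k + coef_seq b g k"
proof -
  have "(deriv ^^ k) (\<lambda>z. f z + g z) 0 = (deriv ^^ k) f 0 + (deriv ^^ k) g 0"
    using assms by (intro higher_deriv_add[where S = UNIV]) (auto simp: entire_def)
  then show ?thesis
    using assms(3) unfolding coef_seq_def add_divide_distrib[symmetric]
    by (intro divide_right_mono) (auto intro: norm_triangle_ineq)
qed

lemma coef_seq_diff_le:
  assumes "f \<in> entire" "g \<in> entire" "b \<ge> 0"
  shows "coef_seq b (\<lambda>z. f z - g z) k \<le> coef_seq b f k + coef_seq b g k"
proof -
  have "(deriv ^^ k) (\<lambda>z. f z - g z) 0 = (deriv ^^ k) f 0 - (deriv ^^ k) g 0"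
    using assms by (intro higher_deriv_diff[where S = UNIV]) (auto simp: entire_def)
  then show ?thesis
    using assms(3) unfolding coef_seq_def add_divide_distrib[symmetric]
    by (intro divide_right_mono) (auto intro: norm_triangle_ineq4)
qed

lemma norm_b_add_le:
  assumes "f \<in> entire" "g \<in> entire" "b \<ge> 0" "norm_finite b f" "norm_finite b g"
  shows "norm_b b (\<lambda>z. f z + g z) \<le> norm_b b f + norm_b b g"
  using coef_seq_add_le[OF assms(1-3)] coef_seq_le_norm_b[OF assms(4)] coef_seq_le_norm_b[OF assms(5)]
  by (intro norm_b_le) (meson add_mono order_trans)

lemma norm_finite_diff:
  assumes "f \<in> entire" "g \<in> entire" "b \<ge> 0" "norm_finite b f" "norm_finite b g"
  shows "norm_finite b (\<lambda>z. f z - g z)"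
  using coef_seq_diff_le[OF assms(1-3)] coef_seq_le_norm_b[OF assms(4)] coef_seq_le_norm_b[OF assms(5)]
  by (intro norm_finiteI[where M = "norm_b b f + norm_b b g"]) (meson add_mono order_trans)

lemma A_space_diff:
  assumes "f \<in> A_space a" "g \<in> A_space a" "a \<ge> 0"
  shows "(\<lambda>z. f z - g z) \<in> A_space a"
  using assms norm_finite_diff[of f g] unfolding A_space_def entire_def
  by (auto intro!: holomorphic_intros)

lemma norm_b_antimono:
  assumes "0 < b" "b \<le> c" "norm_finite b f"
  shows "norm_b c f \<le> norm_b b f"
proof (rule norm_b_le)
  fix k
  have "coef_seq c f k \<le> coef_seq b f k"
    unfolding coef_seq_def using assms(1,2) by (intro divide_left_mono power_mono) auto
  then show "coef_seq c f k \<le> norm_b b f" using coef_seq_le_norm_b[OF assms(3)] order_trans by blast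
qed

lemma istopology_neighbourhood_base:
  assumes directed: "\<And>x i j \<epsilon> \<delta>. P i \<Longrightarrow> P j \<Longrightarrow> \<epsilon> > 0 \<Longrightarrow> \<delta> > 0 \<Longrightarrow>
    \<exists>k \<eta>. P k \<and> \<eta> > 0 \<and> N x k \<eta> \<subseteq> N x i \<epsilon> \<inter> N x j \<delta>"
  shows "istopology (\<lambda>U. U \<subseteq> S \<and> (\<forall>x\<in>U. \<exists>i \<epsilon>. P i \<and> \<epsilon> > 0 \<and> N x i \<epsilon> \<subseteq> U))"
  unfolding istopology_def
proof (rule conjI; intro allI impI)
  fix U V
  assume U: "U \<subseteq> S \<and> (\<forall>x\<in>U. \<exists>i \<epsilon>. P i \<and> \<epsilon> > 0 \<and> N x i \<epsilon> \<subseteq> U)"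
    and V: "V \<subseteq> S \<and> (\<forall>x\<in>V. \<exists>i \<epsilon>. P i \<and> \<epsilon> > 0 \<and> N x i \<epsilon> \<subseteq> V)"
  have "\<exists>k \<eta>. P k \<and> \<eta> > 0 \<and> N x k \<eta> \<subseteq> U \<inter> V" if "x \<in> U \<inter> V" for x
  proof -
    obtain i \<epsilon> j \<delta> where "P i" "\<epsilon> > 0" "N x i \<epsilon> \<subseteq> U" "P j" "\<delta> > 0" "N x j \<delta> \<subseteq> V"
      using U V \<open>x \<in> U \<inter> V\<close> by (meson IntD1 IntD2)
    then show ?thesis using directed[of i j \<epsilon> \<delta> x] by blast
  qed
  then show "U \<inter> V \<subseteq> S \<and> (\<forall>x\<in>U \<inter> V. \<exists>i \<epsilon>. P i \<and> \<epsilon> > 0 \<and> N x i \<epsilon> \<subseteq> U \<inter> V)"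
    using U by blast
next
  fix \<K>
  assume "\<forall>U\<in>\<K>. U \<subseteq> S \<and> (\<forall>x\<in>U. \<exists>i \<epsilon>. P i \<and> \<epsilon> > 0 \<and> N x i \<epsilon> \<subseteq> U)"
  then show "\<Union>\<K> \<subseteq> S \<and> (\<forall>x\<in>\<Union>\<K>. \<exists>i \<epsilon>. P i \<and> \<epsilon> > 0 \<and> N x i \<epsilon> \<subseteq> \<Union>\<K>)"
    by (meson Sup_upper Union_iff Union_least order_trans)
qed

lemma openin_T_topology_finite:
  "openin (T_topology a) U \<longleftrightarrow> U \<subseteq> A_space a \<and>
     (\<forall>f\<in>U. \<exists>F \<epsilon>. finite F \<and> F \<subseteq> {a<..} \<and> \<epsilon> > 0 \<and>
        {g \<in> A_space a. \<forall>b\<in>F. norm_b b (\<lambda>z. g z - f z) < \<epsilon>} \<subseteq> U)"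
proof -
  have "istopology (\<lambda>U. U \<subseteq> A_space a \<and>
     (\<forall>f\<in>U. \<exists>F \<epsilon>. (finite F \<and> F \<subseteq> {a<..}) \<and> \<epsilon> > 0 \<and>
        {g \<in> A_space a. \<forall>b\<in>F. norm_b b (\<lambda>z. g z - f z) < \<epsilon>} \<subseteq> U))"
  proof (rule istopology_neighbourhood_base)
    fix F G :: "real set" and \<epsilon> \<delta> :: real and f
    assume "finite F \<and> F \<subseteq> {a<..}" "finite G \<and> G \<subseteq> {a<..}" "\<epsilon> > 0" "\<delta> > 0"
    then show "\<exists>H \<eta>. (finite H \<and> H \<subseteq> {a<..}) \<and> \<eta> > 0 \<and>
      {g \<in> A_space a. \<forall>b\<in>H. norm_b b (\<lambda>z. g z - f z) < \<eta>} \<subseteq>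
      {g \<in> A_space a. \<forall>b\<in>F. norm_b b (\<lambda>z. g z - f z) < \<epsilon>} \<inter>
      {g \<in> A_space a. \<forall>b\<in>G. norm_b b (\<lambda>z. g z - f z) < \<delta>}"
      by (intro exI[of _ "F \<union> G"] exI[of _ "min \<epsilon> \<delta>"]) auto
  qed
  then show ?thesis
    unfolding T_topology_def by (subst topology_inverse') (simp_all add: conj_assoc)
qed

definition A_ball :: "real \<Rightarrow> real \<Rightarrow> (complex \<Rightarrow> complex) \<Rightarrow> real \<Rightarrow> (complex \<Rightarrow> complex) set" where
  "A_ball a b f \<epsilon> = {g \<in> A_space a. norm_b b (\<lambda>z. g z - f z) < \<epsilon>}"

definition uniform_nbhd :: "complex set \<Rightarrow> (complex \<Rightarrow> complex) \<Rightarrow> real \<Rightarrow> (complex \<Rightarrow> complex) set" where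
  "uniform_nbhd K f \<epsilon> = {g \<in> entire. \<forall>z\<in>K. cmod (g z - f z) < \<epsilon>}"

lemma openin_T_topology:
  assumes "a \<ge> 0"
  shows "openin (T_topology a) U \<longleftrightarrow> U \<subseteq> A_space a \<and> (\<forall>f\<in>U. \<exists>b>a. \<exists>\<epsilon>>0. A_ball a b f \<epsilon> \<subseteq> U)"
  unfolding openin_T_topology_finite
proof (intro conj_cong refl ball_cong iffI)
  fix f assume "U \<subseteq> A_space a" "f \<in> U"
  then have f: "f \<in> A_space a" by blast
  assume "\<exists>F \<epsilon>. finite F \<and> F \<subseteq> {a<..} \<and> \<epsilon> > 0 \<and>
    {g \<in> A_space a. \<forall>b\<in>F. norm_b b (\<lambda>z. g z - f z) < \<epsilon>} \<subseteq> U"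
  then obtain F \<epsilon> where F: "finite F" "F \<subseteq> {a<..}" "\<epsilon> > 0"
    and FU: "{g \<in> A_space a. \<forall>b\<in>F. norm_b b (\<lambda>z. g z - f z) < \<epsilon>} \<subseteq> U"
    by blast
  \<comment> \<open>The norms decrease in b, so the norm at Min F dominates the others in F.\<close>
  define b where "b = (if F = {} then a + 1 else Min F)"
  have b: "b > a" "\<And>c. c \<in> F \<Longrightarrow> b \<le> c"
    using F by (auto simp: b_def)
  have "A_ball a b f \<epsilon> \<subseteq> U"
  proof
    fix g assume g: "g \<in> A_ball a b f \<epsilon>"
    then have gf: "(\<lambda>z. g z - f z) \<in> A_space a"
      using A_space_diff[OF _ f assms] by (simp add: A_ball_def)
    have "norm_b c (\<lambda>z. g z - f z) < \<epsilon>" if "c \<in> F" for c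
      using norm_b_antimono[of b c "\<lambda>z. g z - f z"] gf g b that assms
      by (fastforce simp: A_space_def A_ball_def)
    then show "g \<in> U" using g FU by (auto simp: A_ball_def)
  qed
  then show "\<exists>b>a. \<exists>\<epsilon>>0. A_ball a b f \<epsilon> \<subseteq> U" using b F by blast
next
  fix f assume "\<exists>b>a. \<exists>\<epsilon>>0. A_ball a b f \<epsilon> \<subseteq> U"
  then obtain b \<epsilon> where "b > a" "\<epsilon> > 0" "A_ball a b f \<epsilon> \<subseteq> U" by blast
  then show "\<exists>F \<epsilon>. finite F \<and> F \<subseteq> {a<..} \<and> \<epsilon> > 0 \<and>
    {g \<in> A_space a. \<forall>b\<in>F. norm_b b (\<lambda>z. g z - f z) < \<epsilon>} \<subseteq> U"
    by (intro exI[of _ "{b}"] exI[of _ \<epsilon>]) (auto simp: A_ball_def)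
qed

lemma openin_compact_conv_topology:
  "openin compact_conv_topology U \<longleftrightarrow> U \<subseteq> entire \<and>
     (\<forall>f\<in>U. \<exists>K \<epsilon>. compact K \<and> \<epsilon> > 0 \<and> uniform_nbhd K f \<epsilon> \<subseteq> U)"
proof -
  have "istopology (\<lambda>U. U \<subseteq> entire \<and>
     (\<forall>f\<in>U. \<exists>K \<epsilon>. compact K \<and> \<epsilon> > 0 \<and> {g \<in> entire. \<forall>z\<in>K. cmod (g z - f z) < \<epsilon>} \<subseteq> U))"
  proof (rule istopology_neighbourhood_base)
    fix K L :: "complex set" and \<epsilon> \<delta> :: real and f
    assume "compact K" "compact L" "\<epsilon> > 0" "\<delta> > 0"
    then show "\<exists>M \<eta>. compact M \<and> \<eta> > 0 \<and>
      {g \<in> entire. \<forall>z\<in>M. cmod (g z - f z) < \<eta>} \<subseteq>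
      {g \<in> entire. \<forall>z\<in>K. cmod (g z - f z) < \<epsilon>} \<inter> {g \<in> entire. \<forall>z\<in>L. cmod (g z - f z) < \<delta>}"
      by (intro exI[of _ "K \<union> L"] exI[of _ "min \<epsilon> \<delta>"]) (auto simp: compact_Un)
  qed
  then show ?thesis
    unfolding compact_conv_topology_def uniform_nbhd_def by (subst topology_inverse') simp_all
qed

lemma topspace_T_topology:
  assumes "a \<ge> 0"
  shows "topspace (T_topology a) = A_space a"
proof
  show "topspace (T_topology a) \<subseteq> A_space a"
    using openin_topspace[of "T_topology a"] unfolding openin_T_topology[OF assms] by blast
  have "openin (T_topology a) (A_space a)"
    unfolding openin_T_topology[OF assms] by (auto intro: exI[of _ "a + 1"] exI[of _ 1] simp: A_ball_def)
  then show "A_space a \<subseteq> topspace (T_topology a)" by (rule openin_subset)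
qed

lemma centre_in_A_ball: "f \<in> A_space a \<Longrightarrow> \<epsilon> > 0 \<Longrightarrow> f \<in> A_ball a b f \<epsilon>"
  by (simp add: A_ball_def norm_b_zero)

lemma openin_A_ball:
  assumes "a \<ge> 0" "b > a" "f \<in> A_space a"
  shows "openin (T_topology a) (A_ball a b f \<epsilon>)"
  unfolding openin_T_topology[OF assms(1)]
proof (intro conjI ballI)
  show "A_ball a b f \<epsilon> \<subseteq> A_space a" by (auto simp: A_ball_def)
  fix g assume g: "g \<in> A_ball a b f \<epsilon>"
  define \<delta> where "\<delta> = \<epsilon> - norm_b b (\<lambda>z. g z - f z)"
  have "A_ball a b g \<delta> \<subseteq> A_ball a b f \<epsilon>"
  proof
    fix h assume h: "h \<in> A_ball a b g \<delta>"
    have "h \<in> A_space a" "g \<in> A_space a" using g h by (auto simp: A_ball_def)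
    then have hg: "(\<lambda>z. h z - g z) \<in> A_space a" and gf: "(\<lambda>z. g z - f z) \<in> A_space a"
      using A_space_diff assms(1,3) by auto
    have "norm_b b (\<lambda>z. h z - f z) \<le> norm_b b (\<lambda>z. h z - g z) + norm_b b (\<lambda>z. g z - f z)"
      using norm_b_add_le[of "\<lambda>z. h z - g z" "\<lambda>z. g z - f z" b] hg gf assms(1,2)
      by (simp add: A_space_def)
    then show "h \<in> A_ball a b f \<epsilon>" using h by (simp add: A_ball_def \<delta>_def)
  qed
  moreover have "\<delta> > 0" using g by (simp add: A_ball_def \<delta>_def)
  ultimately show "\<exists>b'>a. \<exists>\<delta>>0. A_ball a b' g \<delta> \<subseteq> A_ball a b f \<epsilon>" using assms(2) by blast
qed

lemma openin_uniform_nbhd: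
  assumes "f \<in> entire" "compact K"
  shows "openin compact_conv_topology (uniform_nbhd K f \<epsilon>)"
  unfolding openin_compact_conv_topology
proof (intro conjI ballI)
  show "uniform_nbhd K f \<epsilon> \<subseteq> entire" by (auto simp: uniform_nbhd_def)
  fix g assume g: "g \<in> uniform_nbhd K f \<epsilon>"
  show "\<exists>K' \<delta>. compact K' \<and> \<delta> > 0 \<and> uniform_nbhd K' g \<delta> \<subseteq> uniform_nbhd K f \<epsilon>"
  proof (cases "K = {}")
    case True
    then show ?thesis by (intro exI[of _ K] exI[of _ 1]) (auto simp: uniform_nbhd_def)
  next
    case False
    have "continuous_on UNIV (\<lambda>z. g z - f z)"
      using g assms(1) unfolding uniform_nbhd_def entire_def
      by (auto intro!: holomorphic_on_imp_continuous_on holomorphic_intros)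
    then have "continuous_on K (\<lambda>z. cmod (g z - f z))"
      by (intro continuous_on_norm) (rule continuous_on_subset, auto)
    then obtain z0 where z0: "z0 \<in> K" "\<And>z. z \<in> K \<Longrightarrow> cmod (g z - f z) \<le> cmod (g z0 - f z0)"
      using continuous_attains_sup[OF assms(2) False] by blast
    define \<delta> where "\<delta> = \<epsilon> - cmod (g z0 - f z0)"
    have "uniform_nbhd K g \<delta> \<subseteq> uniform_nbhd K f \<epsilon>"
    proof
      fix h assume h: "h \<in> uniform_nbhd K g \<delta>"
      have "cmod (h z - f z) < \<epsilon>" if "z \<in> K" for z
        using norm_triangle_ineq[of "h z - g z" "g z - f z"] h z0(2)[OF that] that
        by (auto simp: uniform_nbhd_def \<delta>_def)
      then show "h \<in> uniform_nbhd K f \<epsilon>" using h by (auto simp: uniform_nbhd_def)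
    qed
    moreover have "\<delta> > 0" using g z0(1) by (auto simp: uniform_nbhd_def \<delta>_def)
    ultimately show ?thesis using assms(2) by blast
  qed
qed

lemma norm_b_less_if_head_coefs_le:
  assumes "0 < b'" "b' < b" "\<epsilon> > 0"
  obtains N where "\<And>h. (\<And>k. coef_seq b' h k \<le> C) \<Longrightarrow> (\<And>k. k < N \<Longrightarrow> coef_seq b h k \<le> \<epsilon> / 2)
    \<Longrightarrow> norm_b b h < \<epsilon>"
proof -
  define r where "r = b' / b"
  have r: "0 < r" "r < 1" using assms by (auto simp: r_def)
  have "(\<lambda>N. \<bar>C\<bar> * r ^ N) \<longlonglongrightarrow> 0"
    using r by (intro tendsto_mult_right_zero LIMSEQ_power_zero) auto
  then have "eventually (\<lambda>N. \<bar>C\<bar> * r ^ N < \<epsilon> / 2) sequentially"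
    using assms(3) by (intro order_tendstoD(2)) auto
  then obtain N where N: "\<bar>C\<bar> * r ^ N < \<epsilon> / 2"
    using eventually_sequentially by auto
  show thesis
  proof (rule that[of N])
    fix h assume tail: "\<And>k. coef_seq b' h k \<le> C" and head: "\<And>k. k < N \<Longrightarrow> coef_seq b h k \<le> \<epsilon> / 2"
    have "coef_seq b h k \<le> \<epsilon> / 2" for k
    proof (cases "k < N")
      case False
      have "coef_seq b h k = coef_seq b' h k * r ^ k"
        unfolding r_def by (rule coef_seq_rescale) (use assms in auto)
      also have "\<dots> \<le> \<bar>C\<bar> * r ^ N"
        using tail[of k] False r by (intro mult_mono power_decreasing) auto
      finally show ?thesis using N by linarith
    qed (rule head)
    then have "norm_b b h \<le> \<epsilon> / 2" by (rule norm_b_le)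
    then show "norm_b b h < \<epsilon>" using assms(3) by linarith
  qed
qed

definition taylor_poly :: "(complex \<Rightarrow> complex) \<Rightarrow> nat \<Rightarrow> complex poly" where
  "taylor_poly f n = (\<Sum>k<n. monom ((deriv ^^ k) f 0 / fact k) k)"

lemma higher_deriv_poly: "(deriv ^^ k) (poly p) = poly ((pderiv ^^ k) p)"
proof (induction k)
  case (Suc k)
  have "deriv (poly q) = poly (pderiv q)" for q :: "'a::{real_normed_field} poly"
    by (rule ext) (rule DERIV_imp_deriv[OF poly_DERIV])
  then show ?case using Suc by simp
qed simp

lemma higher_deriv_poly_0: "(deriv ^^ k) (poly p) 0 = fact k * coeff p k"
  by (simp add: higher_deriv_poly poly_0_coeff_0 coeff_higher_pderiv pochhammer_fact[symmetric])

lemma poly_entire: "poly (p :: complex poly) \<in> entire"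
proof -
  have "(\<lambda>z. poly p z) holomorphic_on UNIV" by (intro holomorphic_intros)
  then show ?thesis by (simp add: entire_def)
qed

lemma poly_in_A_space:
  assumes "a \<ge> 0"
  shows "poly (p :: complex poly) \<in> A_space a"
proof -
  have "norm_finite b (poly p)" if "b > a" for b
  proof (rule norm_finiteI)
    fix k
    have "b \<ge> 0" using that assms by linarith
    show "coef_seq b (poly p) k \<le> (\<Sum>j\<le>degree p. coef_seq b (poly p) j)"
    proof (cases "k \<le> degree p")
      case False
      then have "coef_seq b (poly p) k = 0"
        by (simp add: coef_seq_def higher_deriv_poly_0 coeff_eq_0)
      then show ?thesis using \<open>b \<ge> 0\<close> by (simp add: sum_nonneg coef_seq_nonneg)
    qed (use \<open>b \<ge> 0\<close> in \<open>auto intro: member_le_sum coef_seq_nonneg\<close>)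
  qed
  then show ?thesis using poly_entire by (simp add: A_space_def)
qed

lemma coef_seq_taylor_poly_diff:
  assumes "f \<in> entire"
  shows "coef_seq b (\<lambda>z. poly (taylor_poly f n) z - f z) k = (if k < n then 0 else coef_seq b f k)"
proof -
  have "(deriv ^^ k) (\<lambda>z. poly (taylor_poly f n) z - f z) 0
      = (deriv ^^ k) (poly (taylor_poly f n)) 0 - (deriv ^^ k) f 0"
    using assms poly_entire by (intro higher_deriv_diff[where S = UNIV]) (auto simp: entire_def)
  also have "\<dots> = (if k < n then 0 else - (deriv ^^ k) f 0)"
    by (simp add: higher_deriv_poly_0 taylor_poly_def coeff_sum coeff_monom)
  finally show ?thesis by (simp add: coef_seq_def)
qed

lemma taylor_poly_in_A_ball:
  assumes "a \<ge> 0" "f \<in> A_space a" "b > a" "\<epsilon> > 0"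
  obtains n where "poly (taylor_poly f n) \<in> A_ball a b f \<epsilon>"
proof -
  define b' where "b' = (a + b) / 2"
  have b': "0 < b'" "a < b'" "b' < b" using assms by (auto simp: b'_def)
  have fe: "f \<in> entire" and fin: "norm_finite b' f" using assms(2) b' by (auto simp: A_space_def)
  obtain N where N: "\<And>h. (\<And>k. coef_seq b' h k \<le> norm_b b' f)
      \<Longrightarrow> (\<And>k. k < N \<Longrightarrow> coef_seq b h k \<le> \<epsilon> / 2) \<Longrightarrow> norm_b b h < \<epsilon>"
    using norm_b_less_if_head_coefs_le[OF b'(1,3) assms(4)] by blast
  have "norm_b b (\<lambda>z. poly (taylor_poly f N) z - f z) < \<epsilon>"
  proof (rule N)
    fix k
    show "coef_seq b' (\<lambda>z. poly (taylor_poly f N) z - f z) k \<le> norm_b b' f"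
      using coef_seq_le_norm_b[OF fin, of k] norm_b_nonneg[OF _ fin] b'(1)
      by (simp add: coef_seq_taylor_poly_diff[OF fe])
    show "coef_seq b (\<lambda>z. poly (taylor_poly f N) z - f z) k \<le> \<epsilon> / 2" if "k < N"
      using that assms(4) by (simp add: coef_seq_taylor_poly_diff[OF fe])
  qed
  then show thesis using that poly_in_A_space[OF assms(1)] by (simp add: A_ball_def)
qed

lemma closure_of_polynomials:
  assumes "a \<ge> 0"
  shows "T_topology a closure_of polynomials = A_space a"
proof
  show "T_topology a closure_of polynomials \<subseteq> A_space a"
    using closure_of_subset_topspace[of "T_topology a" polynomials] by (simp add: topspace_T_topology[OF assms])
  show "A_space a \<subseteq> T_topology a closure_of polynomials"
  proof
    fix f assume f: "f \<in> A_space a"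
    have "\<exists>p\<in>polynomials. p \<in> U" if "f \<in> U" and U_open: "openin (T_topology a) U" for U
    proof -
      obtain b \<epsilon> where "b > a" "\<epsilon> > 0" "A_ball a b f \<epsilon> \<subseteq> U"
        using \<open>f \<in> U\<close> U_open unfolding openin_T_topology[OF assms] by blast
      moreover obtain n where "poly (taylor_poly f n) \<in> A_ball a b f \<epsilon>"
        using taylor_poly_in_A_ball[OF assms f \<open>b > a\<close> \<open>\<epsilon> > 0\<close>] .
      moreover have "poly (taylor_poly f n) \<in> polynomials"
        by (auto simp: polynomials_def)
      ultimately show ?thesis by blast
    qed
    then show "f \<in> T_topology a closure_of polynomials"
      unfolding closure_of_def using f topspace_T_topology[OF assms] by auto
  qed
qed

lemma norm_le_norm_b_exp:
  assumes "h \<in> entire" "b > 0" "norm_finite b h"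
  shows "cmod (h z) \<le> norm_b b h * exp (b * cmod z)"
proof -
  have "(\<lambda>n. (deriv ^^ n) h 0 / fact n * (z - 0) ^ n) sums h z"
    using assms(1) by (intro holomorphic_power_series[where r = "cmod z + 1"])
      (auto simp: entire_def intro: holomorphic_on_subset)
  then have "cmod (h z) = norm (\<Sum>n. (deriv ^^ n) h 0 / fact n * z ^ n)"
    by (simp add: sums_iff)
  also have "\<dots> \<le> (\<Sum>n. norm_b b h * ((b * cmod z) ^ n /\<^sub>R fact n))"
  proof (rule norm_suminf_le)
    fix n
    have "norm ((deriv ^^ n) h 0 / fact n * z ^ n) = cmod ((deriv ^^ n) h 0) * cmod z ^ n / fact n"
      by (simp add: norm_mult norm_divide norm_power)
    also have "\<dots> \<le> norm_b b h * b ^ n * cmod z ^ n / fact n"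
      using higher_deriv_le_norm_b[OF assms(2,3), of n] by (intro divide_right_mono mult_right_mono) auto
    also have "\<dots> = norm_b b h * ((b * cmod z) ^ n /\<^sub>R fact n)"
      by (simp add: power_mult_distrib field_simps)
    finally show "norm ((deriv ^^ n) h 0 / fact n * z ^ n) \<le> norm_b b h * ((b * cmod z) ^ n /\<^sub>R fact n)" .
    show "summable (\<lambda>n. norm_b b h * ((b * cmod z) ^ n /\<^sub>R fact n))"
      by (intro summable_mult exp_converges[THEN sums_summable])
  qed
  also have "\<dots> = norm_b b h * exp (b * cmod z)"
    using exp_converges[of "b * cmod z"] by (simp add: sums_iff suminf_mult)
  finally show ?thesis .
qed

lemma coef_seq_le_unit_circle_bound:
  assumes "h \<in> entire" "b > 0" "\<And>z. cmod z = 1 \<Longrightarrow> cmod (h z) \<le> M"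
  shows "coef_seq b h k \<le> fact k / b ^ k * M"
proof -
  have "cmod ((deriv ^^ k) h 0) \<le> fact k * M / 1 ^ k"
    using assms(1,3) by (intro Cauchy_inequality)
      (auto simp: entire_def intro: holomorphic_on_subset holomorphic_on_imp_continuous_on)
  then show ?thesis using assms(2) by (simp add: coef_seq_def divide_right_mono)
qed

lemma uniform_nbhd_inter_subset_A_ball:
  assumes "a \<ge> 0" "A_bounded a B" "f \<in> B" "b > a" "\<epsilon> > 0"
  obtains \<delta> where "\<delta> > 0" "uniform_nbhd (cball 0 1) f \<delta> \<inter> B \<subseteq> A_ball a b f \<epsilon>"
proof -
  define b' where "b' = (a + b) / 2"
  have b': "0 < b'" "a < b'" "b' < b" using assms by (auto simp: b'_def)
  have BA: "B \<subseteq> A_space a" using assms(2) by (simp add: A_bounded_def)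
  obtain C where C: "\<And>g. g \<in> B \<Longrightarrow> norm_b b' g \<le> C"
    using assms(2) b'(2) unfolding A_bounded_def by blast
  obtain N where N: "\<And>h. (\<And>k. coef_seq b' h k \<le> 2 * C)
      \<Longrightarrow> (\<And>k. k < N \<Longrightarrow> coef_seq b h k \<le> \<epsilon> / 2) \<Longrightarrow> norm_b b h < \<epsilon>"
    using norm_b_less_if_head_coefs_le[OF b'(1,3) assms(5)] by blast
  define S where "S = (\<Sum>k<N. fact k / b ^ k)"
  have S: "S \<ge> 0" using b' by (auto simp: S_def intro: sum_nonneg)
  define \<delta> where "\<delta> = \<epsilon> / (2 * (S + 1))"
  have "\<delta> > 0" using assms(5) S by (simp add: \<delta>_def)
  moreover have "g \<in> A_ball a b f \<epsilon>" if g: "g \<in> uniform_nbhd (cball 0 1) f \<delta>" "g \<in> B" for g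
  proof -
    have fe: "f \<in> entire" and ge: "g \<in> entire" using assms(3) g BA by (auto simp: A_space_def)
    have fin: "norm_finite b' f" "norm_finite b' g" using assms(3) g BA b' by (auto simp: A_space_def)
    have "norm_b b (\<lambda>z. g z - f z) < \<epsilon>"
    proof (rule N)
      fix k
      show "coef_seq b' (\<lambda>z. g z - f z) k \<le> 2 * C"
        using coef_seq_diff_le[OF ge fe, of b' k] coef_seq_le_norm_b[OF fin(1), of k]
          coef_seq_le_norm_b[OF fin(2), of k] C[OF assms(3)] C[OF g(2)] b'(1)
        by linarith
      assume "k < N"
      have "(\<lambda>z. g z - f z) \<in> entire"
        using fe ge by (auto simp: entire_def intro!: holomorphic_intros)
      then have "coef_seq b (\<lambda>z. g z - f z) k \<le> fact k / b ^ k * \<delta>"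
        using g(1) b' by (intro coef_seq_le_unit_circle_bound) (auto simp: uniform_nbhd_def less_imp_le)
      also have "\<dots> \<le> S * \<delta>"
        unfolding S_def using \<open>k < N\<close> \<open>\<delta> > 0\<close> b'
        by (intro mult_right_mono member_le_sum) auto
      also have "\<dots> \<le> \<epsilon> / 2"
        using S assms(5) by (simp add: \<delta>_def field_simps)
      finally show "coef_seq b (\<lambda>z. g z - f z) k \<le> \<epsilon> / 2" .
    qed
    then show ?thesis using g(2) BA by (auto simp: A_ball_def)
  qed
  ultimately show thesis using that by blast
qed

lemma A_ball_subset_uniform_nbhd:
  assumes "a \<ge> 0" "f \<in> A_space a" "compact K" "\<epsilon> > 0"
  obtains \<eta> where "\<eta> > 0" "A_ball a (a + 1) f \<eta> \<subseteq> uniform_nbhd K f \<epsilon>"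
proof -
  obtain R where R: "R > 0" "\<And>z. z \<in> K \<Longrightarrow> cmod z \<le> R"
    using compact_imp_bounded[OF assms(3)] unfolding bounded_pos by blast
  define b where "b = a + 1"
  have b: "b > a" "b > 0" using assms(1) by (auto simp: b_def)
  define \<eta> where "\<eta> = \<epsilon> / exp (b * R)"
  have "\<eta> > 0" using assms(4) by (simp add: \<eta>_def)
  moreover have "g \<in> uniform_nbhd K f \<epsilon>" if g: "g \<in> A_ball a b f \<eta>" for g
  proof -
    have "(\<lambda>z. g z - f z) \<in> A_space a"
      using g A_space_diff[OF _ assms(2,1)] by (simp add: A_ball_def)
    then have h: "(\<lambda>z. g z - f z) \<in> entire" "norm_finite b (\<lambda>z. g z - f z)"
      using b by (auto simp: A_space_def)
    have "cmod (g z - f z) < \<epsilon>" if "z \<in> K" for z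
    proof -
      have "cmod (g z - f z) \<le> norm_b b (\<lambda>z. g z - f z) * exp (b * cmod z)"
        using norm_le_norm_b_exp[OF h(1) b(2) h(2)] by simp
      also have "\<dots> \<le> norm_b b (\<lambda>z. g z - f z) * exp (b * R)"
        using R(2)[OF that] b norm_b_nonneg[OF _ h(2)] by (intro mult_left_mono) auto
      also have "\<dots> < \<eta> * exp (b * R)"
        using g by (intro mult_strict_right_mono) (auto simp: A_ball_def)
      finally show ?thesis by (simp add: \<eta>_def)
    qed
    then show ?thesis using g by (auto simp: A_ball_def A_space_def uniform_nbhd_def)
  qed
  ultimately show thesis using that by (auto simp: b_def)
qed

lemma openin_subtopology_by_local_nbhds:
  assumes nbhds: "\<And>V x. openin X V \<Longrightarrow> x \<in> V \<Longrightarrow> x \<in> B \<Longrightarrow> \<exists>W. openin Y W \<and> x \<in> W \<and> W \<inter> B \<subseteq> V"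
    and "openin (subtopology X B) U"
  shows "openin (subtopology Y B) U"
proof -
  obtain V where V: "openin X V" "U = V \<inter> B"
    using assms(2) by (auto simp: openin_subtopology)
  show ?thesis
  proof (subst openin_subopen, intro ballI)
    fix x assume "x \<in> U"
    then obtain W where "openin Y W" "x \<in> W" "W \<inter> B \<subseteq> V"
      using nbhds[OF V(1)] V(2) by blast
    then show "\<exists>T. openin (subtopology Y B) T \<and> x \<in> T \<and> T \<subseteq> U"
      using V(2) \<open>x \<in> U\<close> by (intro exI[of _ "W \<inter> B"]) (auto simp: openin_subtopology)
  qed
qed

lemma subtopology_T_topology_eq:
  assumes "a \<ge> 0" "A_bounded a B"
  shows "subtopology (T_topology a) B = subtopology compact_conv_topology B"
proof -
  have BA: "B \<subseteq> A_space a" using assms(2) by (simp add: A_bounded_def)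
  have "\<exists>W. openin compact_conv_topology W \<and> f \<in> W \<and> W \<inter> B \<subseteq> V"
    if V: "openin (T_topology a) V" "f \<in> V" and "f \<in> B" for V f
  proof -
    obtain b \<epsilon> where "b > a" "\<epsilon> > 0" "A_ball a b f \<epsilon> \<subseteq> V"
      using V unfolding openin_T_topology[OF assms(1)] by blast
    moreover obtain \<delta> where "\<delta> > 0" "uniform_nbhd (cball 0 1) f \<delta> \<inter> B \<subseteq> A_ball a b f \<epsilon>"
      using uniform_nbhd_inter_subset_A_ball[OF assms \<open>f \<in> B\<close> \<open>b > a\<close> \<open>\<epsilon> > 0\<close>] .
    moreover have "f \<in> entire" using \<open>f \<in> B\<close> BA by (auto simp: A_space_def)
    ultimately show ?thesis
      using openin_uniform_nbhd[OF _ compact_cball]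
      by (intro exI[of _ "uniform_nbhd (cball 0 1) f \<delta>"]) (auto simp: uniform_nbhd_def)
  qed
  moreover have "\<exists>W. openin (T_topology a) W \<and> f \<in> W \<and> W \<inter> B \<subseteq> V"
    if V: "openin compact_conv_topology V" "f \<in> V" and "f \<in> B" for V f
  proof -
    obtain K \<epsilon> where "compact K" "\<epsilon> > 0" "uniform_nbhd K f \<epsilon> \<subseteq> V"
      using V unfolding openin_compact_conv_topology by blast
    moreover have f: "f \<in> A_space a" using \<open>f \<in> B\<close> BA by blast
    moreover obtain \<eta> where "\<eta> > 0" "A_ball a (a + 1) f \<eta> \<subseteq> uniform_nbhd K f \<epsilon>"
      using A_ball_subset_uniform_nbhd[OF assms(1) f \<open>compact K\<close> \<open>\<epsilon> > 0\<close>] .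
    ultimately show ?thesis
      using assms(1) by (intro exI[of _ "A_ball a (a + 1) f \<eta>"]) (auto intro: openin_A_ball centre_in_A_ball)
  qed
  ultimately show ?thesis
    unfolding topology_eq by (meson openin_subtopology_by_local_nbhds)
qed

lemma coef_seq_mult_le:
  assumes "f \<in> entire" "g \<in> entire" "b > 0" "c > 0" "norm_finite b f" "norm_finite c g"
  shows "coef_seq (b + c) (\<lambda>z. f z * g z) n \<le> norm_b b f * norm_b c g"
proof -
  have "(deriv ^^ n) (\<lambda>z. f z * g z) 0 =
      (\<Sum>i = 0..n. of_nat (n choose i) * (deriv ^^ i) f 0 * (deriv ^^ (n - i)) g 0)"
    using assms(1,2) by (intro higher_deriv_mult[where S = UNIV]) (auto simp: entire_def)
  then have "cmod ((deriv ^^ n) (\<lambda>z. f z * g z) 0)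
      \<le> (\<Sum>i = 0..n. (n choose i) * cmod ((deriv ^^ i) f 0) * cmod ((deriv ^^ (n - i)) g 0))"
    by (auto intro: order_trans[OF norm_sum] simp: norm_mult)
  also have "\<dots> \<le> (\<Sum>i = 0..n. (n choose i) * (norm_b b f * b ^ i) * (norm_b c g * c ^ (n - i)))"
    using higher_deriv_le_norm_b[OF assms(3,5)] higher_deriv_le_norm_b[OF assms(4,6)]
      norm_b_nonneg[OF _ assms(5)] norm_b_nonneg[OF _ assms(6)] assms(3,4)
    by (intro sum_mono mult_mono mult_left_mono) auto
  also have "\<dots> = norm_b b f * norm_b c g * (b + c) ^ n"
    by (simp add: binomial_ring[of b c n] atLeast0AtMost sum_distrib_left algebra_simps)
  finally show ?thesis
    using assms(3,4) by (simp add: coef_seq_def pos_divide_le_eq)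
qed

lemma A_space_mult:
  assumes "a \<ge> 0" "b \<ge> 0" "f \<in> A_space a" "g \<in> A_space b"
  shows "(\<lambda>z. f z * g z) \<in> A_space (a + b)"
proof -
  have fe: "f \<in> entire" and ge: "g \<in> entire" using assms(3,4) by (auto simp: A_space_def)
  have "norm_finite c (\<lambda>z. f z * g z)" if "c > a + b" for c
  proof -
    define d where "d = (c - a - b) / 2"
    have "a + d > a" "b + d > b" "c = (a + d) + (b + d)" using that by (auto simp: d_def)
    then show ?thesis
      using coef_seq_mult_le[OF fe ge, of "a + d" "b + d"] assms
      by (intro norm_finiteI) (auto simp: A_space_def)
  qed
  moreover have "(\<lambda>z. f z * g z) \<in> entire"
    using fe ge by (auto simp: entire_def intro: holomorphic_on_mult)
  ultimately show ?thesis by (simp add: A_space_def)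
qed

theorem theorem1p1:
  fixes a :: real
  assumes "a \<ge> 0"
  shows "(T_topology a) closure_of polynomials = A_space a
    \<and> (\<forall>B. A_bounded a B \<longrightarrow>
           subtopology (T_topology a) B = subtopology compact_conv_topology B)
    \<and> (\<forall>b f g. b \<ge> 0 \<longrightarrow> f \<in> A_space a \<longrightarrow> g \<in> A_space b \<longrightarrow>
           (\<lambda>z. f z * g z) \<in> A_space (a + b))"
  using closure_of_polynomials[OF assms] subtopology_T_topology_eq[OF assms] A_space_mult[OF assms]
  by blast

end
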